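(* Let $F$ be a field with $\operatorname{char}(F)\neq 2$ and let $U$ be a noncommutative unital prime associative $F$-algebra. Consider the algebra $A=U\times U$ as a superalgebra with respect to the grading induced by the exchange automorphism $(u,v)\mapsto(v,u)$, i.e. $A_0=\{(u,u):u\in U\}$ and $A_1=\{(u,-u):u\in U\}$. Then every Lie superautomorphism $\varphi$ of $A$ is either a superautomorphism or the negative of a superantiautomorphism.
   Context: A superalgebra is an algebra $A=A_0\oplus A_1$ with $A_iA_j\subseteq A_{i+j}$ ($i,j\in\mathbb Z_2$); homogeneous elements of $A_i$ have degree $|x|=i$; graded linear maps preserve degrees. The supercommutator is $[x,y]_s=xy-(-1)^{|x||y|}yx$ for homogeneous $x,y$, extended bilinearly. A Lie superautomorphism of $A$ is a bijective graded linear map $\varphi:A\to A$ with $\varphi([x,y]_s)=[\varphi(x),\varphi(y)]_s$. A superautomorphism is a bijective graded algebra homomorphism; a superantiautomorphism is a bijective graded linear map $\psi$ with $\psi(xy)=(-1)^{|x||y|}\psi(y)\psi(x)$ for homogeneous $x,y$. *)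

theory Defs
  imports Complex_Main "HOL-Library.Product_Plus"
begin

text \<open>The unital associative F-algebra U is a type 'u of class ring_1 together with a
scalar multiplication scale by the field 'k making it an F-module, compatible with
the product. The algebra A = U x U carries componentwise operations
(addition from Product_Plus, product and scalars defined below).\<close>

definition F_algebra :: "('k::field \<Rightarrow> 'u::ring_1 \<Rightarrow> 'u) \<Rightarrow> bool" where
  "F_algebra scale \<longleftrightarrow> module scale \<and>
     (\<forall>c x y. scale c (x * y) = scale c x * y \<and> scale c (x * y) = x * scale c y)"

definition prime_ring :: "'u::ring_1 itself \<Rightarrow> bool" where
  "prime_ring _ \<longleftrightarrow> (\<forall>a b::'u. (\<forall>x. a * x * b = 0) \<longrightarrow> a = 0 \<or> b = 0)"

definition pmult :: "'u::ring_1 \<times> 'u \<Rightarrow> 'u \<times> 'u \<Rightarrow> 'u \<times> 'u" where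
  "pmult p q = (fst p * fst q, snd p * snd q)"

definition pscale :: "('k \<Rightarrow> 'u \<Rightarrow> 'u) \<Rightarrow> 'k \<Rightarrow> 'u \<times> 'u \<Rightarrow> 'u \<times> 'u" where
  "pscale scale c p = (scale c (fst p), scale c (snd p))"

definition A0 :: "('u::ring_1 \<times> 'u) set" where
  "A0 = {(u, u) | u. True}"

definition A1 :: "('u::ring_1 \<times> 'u) set" where
  "A1 = {(u, - u) | u. True}"

definition homog :: "('u::ring_1 \<times> 'u) set" where
  "homog = A0 \<union> A1"

text \<open>Supercommutator on homogeneous elements (sign -1 exactly when both are odd;
for the element 0, lying in both components, both readings give 0).\<close>
definition scomm :: "'u::ring_1 \<times> 'u \<Rightarrow> 'u \<times> 'u \<Rightarrow> 'u \<times> 'u" where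
  "scomm x y = (if x \<in> A1 \<and> y \<in> A1 then pmult x y + pmult y x else pmult x y - pmult y x)"

definition graded_linear :: "('k::field \<Rightarrow> 'u::ring_1 \<Rightarrow> 'u) \<Rightarrow> ('u \<times> 'u \<Rightarrow> 'u \<times> 'u) \<Rightarrow> bool" where
  "graded_linear scale f \<longleftrightarrow>
     (\<forall>x y. f (x + y) = f x + f y) \<and> (\<forall>c x. f (pscale scale c x) = pscale scale c (f x)) \<and>
     f ` A0 \<subseteq> A0 \<and> f ` A1 \<subseteq> A1"

definition lie_superaut :: "('k::field \<Rightarrow> 'u::ring_1 \<Rightarrow> 'u) \<Rightarrow> ('u \<times> 'u \<Rightarrow> 'u \<times> 'u) \<Rightarrow> bool" where
  "lie_superaut scale f \<longleftrightarrow> bij f \<and> graded_linear scale f \<and>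
     (\<forall>x\<in>homog. \<forall>y\<in>homog. f (scomm x y) = scomm (f x) (f y))"

definition superaut :: "('k::field \<Rightarrow> 'u::ring_1 \<Rightarrow> 'u) \<Rightarrow> ('u \<times> 'u \<Rightarrow> 'u \<times> 'u) \<Rightarrow> bool" where
  "superaut scale f \<longleftrightarrow> bij f \<and> graded_linear scale f \<and>
     (\<forall>x y. f (pmult x y) = pmult (f x) (f y))"

definition superantiaut :: "('k::field \<Rightarrow> 'u::ring_1 \<Rightarrow> 'u) \<Rightarrow> ('u \<times> 'u \<Rightarrow> 'u \<times> 'u) \<Rightarrow> bool" where
  "superantiaut scale f \<longleftrightarrow> bij f \<and> graded_linear scale f \<and>
     (\<forall>x\<in>homog. \<forall>y\<in>homog.
        f (pmult x y) = (if x \<in> A1 \<and> y \<in> A1 then - pmult (f y) (f x) else pmult (f y) (f x)))"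

end

theory Submission
  imports Defs
begin

(* Write \<phi>(u,u) = (f u, f u) and \<phi>(u,-u) = (g u, -g u). The Lie superidentities give
   g[u,v] = [f u, g v] and f(v w + w v) = g v g w + g w g v. Taking v = 1, resp. w = 1,
   shows that e = g 1 is central and f = e g; combining both identities then gives
   2 e g(v w) = (1 + e^2) g v g w + (1 - e^2) g w g v.
   As g is onto, associativity of U forces the product x * y = (1+e^2) x y + (1-e^2) y x to be
   associative, i.e. (1+e^2)(1-e^2)[b,[a,c]] = 0. In a noncommutative prime ring this means
   e^2 = 1 or e^2 = -1: in the first case g(v w) = e g v g w and \<phi> is multiplicative, in the
   second g(v w) = -e g w g v and -\<phi> is anti-multiplicative. *)

lemma module_half_plus_half:
  fixes scale :: "'k::field \<Rightarrow> 'v::ab_group_add \<Rightarrow> 'v" and x :: 'v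
  assumes "module scale" and "(2::'k) \<noteq> 0"
  shows "scale (inverse 2) x + scale (inverse 2) x = x"
proof -
  interpret module scale by fact
  have "(inverse 2 :: 'k) + inverse 2 = 1" using assms(2) by (simp add: field_simps)
  then show ?thesis by (metis scale_left_distrib scale_one)
qed

lemma module_two_torsion_free:
  fixes scale :: "'k::field \<Rightarrow> 'v::ab_group_add \<Rightarrow> 'v" and x :: 'v
  assumes "module scale" and "(2::'k) \<noteq> 0" and "x + x = 0"
  shows "x = 0"
proof -
  interpret module scale by fact
  have "x = scale (inverse 2) (x + x)"
    using module_half_plus_half[OF assms(1,2)] by (simp add: scale_right_distrib)
  with assms(3) show ?thesis by simp
qed

lemma double_cancel:
  fixes x y :: "'a::ab_group_add"
  assumes two_torsion_free: "\<And>z::'a. z + z = 0 \<Longrightarrow> z = 0" and "x + x = y + y"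
  shows "x = y"
proof -
  have "(x - y) + (x - y) = 0" using assms(2) by (simp add: algebra_simps)
  then have "x - y = 0" by (rule two_torsion_free)
  then show ?thesis by simp
qed

lemma prod_eq_even_plus_odd:
  fixes scale :: "'k::field \<Rightarrow> 'v::ab_group_add \<Rightarrow> 'v" and x :: "'v \<times> 'v"
  assumes "module scale" and "(2::'k) \<noteq> 0"
  obtains s d where "x = (s, s) + (d, - d)"
proof -
  obtain p q where x: "x = (p, q)" by fastforce
  let ?h = "scale (inverse 2)"
  have "x = (?h p + ?h q, ?h p + ?h q) + (?h p - ?h q, - (?h p - ?h q))"
    using x module_half_plus_half[OF assms, of p] module_half_plus_half[OF assms, of q]
    by (simp add: algebra_simps)
  then show thesis by (rule that)
qed

lemma prime_ring_central_mult_eq_0: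
  fixes z w :: "'u::ring_1"
  assumes prime: "prime_ring TYPE('u)" and central: "\<And>x. z * x = x * z" and "z * w = 0"
  shows "z = 0 \<or> w = 0"
proof -
  have "\<forall>x. z * x * w = 0" using central assms(3) by (metis mult.assoc mult_zero_right)
  then show ?thesis using prime unfolding prime_ring_def by blast
qed

lemma prime_ring_commute_if_central_commutators:
  fixes b c :: "'u::ring_1"
  assumes prime: "prime_ring TYPE('u)"
    and central: "\<And>x y z::'u. x * (y * z - z * y) = (y * z - z * y) * x"
  shows "b * c = c * b"
proof -
  define z where "z = b * c - c * b"
  have zc: "z * c = c * z" unfolding z_def by (rule central[symmetric])
  have "b * (b * c) - b * c * b = b * z" by (simp add: z_def algebra_simps)
  then have bz: "c * (b * z) = b * z * c" using central[of c b "b * c"] by simp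
  \<comment> \<open>[b, bc] = bz, so the central element z = [b, c] squares to zero\<close>
  have "z * z = b * (c * z) - c * (b * z)" unfolding z_def by (simp add: algebra_simps)
  also have "\<dots> = 0" using zc bz by (simp add: mult.assoc)
  finally have "z * z = 0" .
  moreover have "z * x = x * z" for x unfolding z_def by (rule central[symmetric])
  ultimately have "z = 0" using prime_ring_central_mult_eq_0[OF prime] by blast
  then show ?thesis unfolding z_def by simp
qed

definition twisted_mult :: "'a::ring \<Rightarrow> 'a \<Rightarrow> 'a \<Rightarrow> 'a \<Rightarrow> 'a" where
  "twisted_mult A B x y = A * (x * y) + B * (y * x)"

lemma twisted_mult_assoc_defect:
  fixes A B :: "'a::ring"
  assumes A: "\<And>x. A * x = x * A" and B: "\<And>x. B * x = x * B"
  shows "twisted_mult A B (twisted_mult A B a b) c - twisted_mult A B a (twisted_mult A B b c)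
       = A * B * (b * (a * c - c * a) - (a * c - c * a) * b)"
proof -
  have pullA: "x * (A * y) = A * (x * y)" and pullB: "x * (B * y) = B * (x * y)" for x y
    using A[of x] B[of x] by (simp_all flip: mult.assoc)
  show ?thesis unfolding twisted_mult_def
    by (simp add: algebra_simps pullA[of a] pullA[of b] pullA[of c] pullA[of B]
        pullB[of a] pullB[of b] pullB[of c])
qed

lemma twisted_mult_central_scalar:
  fixes A B z :: "'a::ring"
  assumes A: "\<And>x. A * x = x * A" and B: "\<And>x. B * x = x * B" and z: "\<And>x. z * x = x * z"
  shows "z * twisted_mult A B x y = twisted_mult A B (z * x) y"
    and "z * twisted_mult A B x y = twisted_mult A B x (z * y)"
proof -
  have pull: "p * (z * q) = z * (p * q)" for p q
    using z[of p] by (simp flip: mult.assoc)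
  show "z * twisted_mult A B x y = twisted_mult A B (z * x) y"
    unfolding twisted_mult_def by (simp add: algebra_simps pull[of A] pull[of B] pull[of y])
  show "z * twisted_mult A B x y = twisted_mult A B x (z * y)"
    unfolding twisted_mult_def by (simp add: algebra_simps pull[of A] pull[of B] pull[of x])
qed

lemma twisted_mult_assoc_if_surj_hom:
  fixes e A B :: "'a::ring" and g :: "'b::semigroup_mult \<Rightarrow> 'a"
  assumes A: "\<And>x. A * x = x * A" and B: "\<And>x. B * x = x * B" and e: "\<And>x. e * x = x * e"
    and "surj g"
    and hom: "\<And>v w. e * g (v * w) + e * g (v * w) = twisted_mult A B (g v) (g w)"
  shows "twisted_mult A B (twisted_mult A B a b) c = twisted_mult A B a (twisted_mult A B b c)"
proof -
  obtain v w z where a: "a = g v" and b: "b = g w" and c: "c = g z"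
    using \<open>surj g\<close> by (metis surjD)
  have ee: "(e + e) * x = x * (e + e)" for x using e[of x] by (simp add: algebra_simps)
  note scalar = twisted_mult_central_scalar[OF A B ee]
  have "twisted_mult A B (twisted_mult A B a b) c = twisted_mult A B ((e + e) * g (v * w)) (g z)"
    using hom[of v w] a b c by (simp add: distrib_right)
  also have "\<dots> = (e + e) * (e * g (v * w * z) + e * g (v * w * z))"
    by (simp add: scalar(1)[symmetric] hom)
  also have "\<dots> = twisted_mult A B (g v) ((e + e) * g (w * z))"
    by (simp add: scalar(2)[symmetric] hom mult.assoc)
  also have "\<dots> = twisted_mult A B a (twisted_mult A B b c)"
    using hom[of w z] a b c by (simp add: distrib_right)
  finally show ?thesis .
qed

lemma prime_ring_twisted_mult_assoc_degenerate:
  fixes A B :: "'u::ring_1"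
  assumes prime: "prime_ring TYPE('u)" and noncomm: "\<exists>x y::'u. x * y \<noteq> y * x"
    and A: "\<And>x. A * x = x * A" and B: "\<And>x. B * x = x * B"
    and assoc: "\<And>a b c. twisted_mult A B (twisted_mult A B a b) c
                       = twisted_mult A B a (twisted_mult A B b c)"
  shows "A = 0 \<or> B = 0"
proof -
  have AB: "A * B * x = x * (A * B)" for x
  proof -
    have "A * B * x = A * (x * B)" by (simp add: B mult.assoc)
    also have "\<dots> = A * x * B" by (simp add: mult.assoc)
    also have "\<dots> = x * (A * B)" by (simp only: A[of x] mult.assoc)
    finally show ?thesis .
  qed
  have "A * B = 0"
  proof (rule ccontr)
    assume "A * B \<noteq> 0"
    have commutators_central: "x * (y * z - z * y) = (y * z - z * y) * x" for x y z :: 'u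
    proof -
      have "A * B * (x * (y * z - z * y) - (y * z - z * y) * x) = 0"
        using twisted_mult_assoc_defect[OF A B, of y x z] assoc[of y x z] by simp
      then have "x * (y * z - z * y) - (y * z - z * y) * x = 0"
        using prime_ring_central_mult_eq_0[OF prime AB] \<open>A * B \<noteq> 0\<close> by blast
      then show ?thesis by simp
    qed
    have "x * y = y * x" for x y :: 'u
      using prime_ring_commute_if_central_commutators[OF prime commutators_central] .
    with noncomm show False by blast
  qed
  then show ?thesis using prime_ring_central_mult_eq_0[OF prime A] by blast
qed

locale lie_pair =
  fixes f g :: "'u::ring_1 \<Rightarrow> 'u"
  assumes two_torsion_free: "\<And>x::'u. x + x = 0 \<Longrightarrow> x = 0"
    and f_add: "\<And>x y. f (x + y) = f x + f y"
    and g_add: "\<And>x y. g (x + y) = g x + g y"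
    and f_surj: "surj f"
    and g_commutator: "\<And>u v. g (u * v - v * u) = f u * g v - g v * f u"
    and f_anticommutator: "\<And>v w. f (v * w + w * v) = g v * g w + g w * g v"
begin

lemma unit_central: "g 1 * x = x * g 1"
proof -
  obtain u where x: "x = f u" using f_surj by (metis surjD)
  have "g 0 = 0" using g_add[of 0 0] by simp
  then show ?thesis using g_commutator[of u 1] x by simp
qed

lemma unit_left_commute: "x * (g 1 * y) = g 1 * (x * y)"
  using unit_central[of x] by (simp flip: mult.assoc)

lemma f_eq_unit_mult_g: "f v = g 1 * g v"
proof (rule double_cancel[OF two_torsion_free])
  show "f v + f v = g 1 * g v + g 1 * g v"
    using f_anticommutator[of v 1] f_add[of v v] unit_central[of "g v"] by simp
qed

lemma twisted_hom:
  "g 1 * g (v * w) + g 1 * g (v * w)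
     = twisted_mult (1 + g 1 * g 1) (1 - g 1 * g 1) (g v) (g w)"
proof -
  define e where "e = g 1"
  have "g (v * w) + g (v * w) = g (v * w + w * v) + g (v * w - w * v)"
    by (simp flip: g_add)
  then have "e * g (v * w) + e * g (v * w) = e * g (v * w + w * v) + e * g (v * w - w * v)"
    by (simp flip: distrib_left)
  also have "\<dots> = (g v * g w + g w * g v) + e * (e * (g v * g w - g w * g v))"
    using f_anticommutator[of v w] g_commutator[of v w]
    by (simp add: f_eq_unit_mult_g unit_left_commute[of "g w"] e_def right_diff_distrib mult.assoc)
  also have "\<dots> = twisted_mult (1 + e * e) (1 - e * e) (g v) (g w)"
    unfolding twisted_mult_def by (simp add: algebra_simps)
  finally show ?thesis unfolding e_def .
qed

lemma unit_square_cases: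
  assumes prime: "prime_ring TYPE('u)" and noncomm: "\<exists>x y::'u. x * y \<noteq> y * x"
    and "surj g"
  shows "g 1 * g 1 = 1 \<or> g 1 * g 1 = -1"
proof -
  have square: "g 1 * g 1 * x = x * (g 1 * g 1)" for x
    by (metis unit_central mult.assoc)
  have A: "(1 + g 1 * g 1) * x = x * (1 + g 1 * g 1)"
    and B: "(1 - g 1 * g 1) * x = x * (1 - g 1 * g 1)" for x
    using square[of x] by (simp_all add: algebra_simps)
  have "twisted_mult (1 + g 1 * g 1) (1 - g 1 * g 1)
          (twisted_mult (1 + g 1 * g 1) (1 - g 1 * g 1) a b) c
      = twisted_mult (1 + g 1 * g 1) (1 - g 1 * g 1) a
          (twisted_mult (1 + g 1 * g 1) (1 - g 1 * g 1) b c)" for a b c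
    using A B unit_central \<open>surj g\<close> twisted_hom by (rule twisted_mult_assoc_if_surj_hom)
  then have "1 + g 1 * g 1 = 0 \<or> 1 - g 1 * g 1 = 0"
    using A B by (intro prime_ring_twisted_mult_assoc_degenerate[OF prime noncomm])
  then show ?thesis
  proof
    assume "1 + g 1 * g 1 = 0"
    then show ?thesis by (simp add: add_eq_0_iff)
  next
    assume "1 - g 1 * g 1 = 0"
    then show ?thesis by simp
  qed
qed

lemma mult_if_unit_square_one:
  assumes square: "g 1 * g 1 = 1"
  shows "f (u * w) = f u * f w" and "g (u * w) = f u * g w"
    and "g (u * w) = g u * f w" and "f (u * w) = g u * g w"
proof -
  have "g 1 * g (u * w) + g 1 * g (u * w) = g u * g w + g u * g w"
    using twisted_hom[of u w] square by (simp add: twisted_mult_def mult_2)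
  then have "g 1 * g (u * w) = g u * g w" using double_cancel[OF two_torsion_free] by blast
  then have "g 1 * g 1 * g (u * w) = g 1 * (g u * g w)" by (simp add: mult.assoc)
  then have g_mult: "g (u * w) = g 1 * (g u * g w)" using square by simp
  have unit_unit: "g 1 * (g 1 * x) = x" for x using square by (simp flip: mult.assoc)
  show "f (u * w) = f u * f w" "g (u * w) = f u * g w" "g (u * w) = g u * f w" "f (u * w) = g u * g w"
    by (simp_all add: f_eq_unit_mult_g g_mult unit_unit mult.assoc unit_left_commute[of "g u"])
qed

lemma neg_antimult_if_unit_square_minus_one:
  assumes square: "g 1 * g 1 = -1"
  shows "- f (u * w) = (- f w) * (- f u)" and "- g (u * w) = (- g w) * (- f u)"
    and "- g (u * w) = (- f w) * (- g u)" and "- f (u * w) = - ((- g w) * (- g u))"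
proof -
  have "g 1 * g (u * w) + g 1 * g (u * w) = g w * g u + g w * g u"
    using twisted_hom[of u w] square by (simp add: twisted_mult_def mult_2)
  then have "g 1 * g (u * w) = g w * g u" using double_cancel[OF two_torsion_free] by blast
  then have "g 1 * g 1 * g (u * w) = g 1 * (g w * g u)" by (simp add: mult.assoc)
  then have g_mult: "g (u * w) = - (g 1 * (g w * g u))" using square by (metis minus_minus mult_minus1)
  have unit_unit: "g 1 * (g 1 * x) = - x" for x using square by (simp flip: mult.assoc)
  show "- f (u * w) = (- f w) * (- f u)" "- g (u * w) = (- g w) * (- f u)"
    "- g (u * w) = (- f w) * (- g u)" "- f (u * w) = - ((- g w) * (- g u))"
    by (simp_all add: f_eq_unit_mult_g g_mult unit_unit mult.assoc unit_left_commute[of "g w"])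
qed

end

lemma diag_mem_A1_imp_eq_0:
  fixes u :: "'u::ring_1"
  assumes two_torsion_free: "\<And>x::'u. x + x = 0 \<Longrightarrow> x = 0" and "(u, u) \<in> A1"
  shows "u = 0"
proof -
  from assms(2) have "u = - u" unfolding A1_def by auto
  then have "u + u = 0" by (metis add.right_inverse)
  then show ?thesis by (rule two_torsion_free)
qed

lemma scomm_even_odd:
  fixes u v :: "'u::ring_1"
  assumes two_torsion_free: "\<And>x::'u. x + x = 0 \<Longrightarrow> x = 0"
  shows "scomm (u, u) (v, - v) = (u * v - v * u, - (u * v - v * u))"
proof (cases "(u, u) \<in> A1")
  case True
  then have "u = 0" using diag_mem_A1_imp_eq_0[OF two_torsion_free] by blast
  then show ?thesis by (simp add: scomm_def pmult_def zero_prod_def)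
next
  case False
  then show ?thesis by (simp add: scomm_def pmult_def)
qed

lemma scomm_odd_odd: "scomm (v, - v) (w, - w) = (v * w + w * v, v * w + w * v)"
  by (auto simp: scomm_def pmult_def A1_def)

lemma graded_linearD:
  assumes "graded_linear scale \<phi>"
  shows "\<phi> (x + y) = \<phi> x + \<phi> y" and "\<phi> (pscale scale c x) = pscale scale c (\<phi> x)"
    and "\<phi> ` A0 \<subseteq> A0" and "\<phi> ` A1 \<subseteq> A1"
  using assms unfolding graded_linear_def by (simp_all del: split_paired_All)

lemma graded_linear_components:
  assumes "graded_linear scale \<phi>"
  obtains f g where "\<And>u. \<phi> (u, u) = (f u, f u)" and "\<And>u. \<phi> (u, - u) = (g u, - g u)"
    and "\<And>x y. f (x + y) = f x + f y" and "\<And>x y. g (x + y) = g x + g y"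
proof
  note add = graded_linearD(1)[OF assms]
  note A0 = graded_linearD(3)[OF assms] and A1 = graded_linearD(4)[OF assms]
  show "\<phi> (u, u) = (fst (\<phi> (u, u)), fst (\<phi> (u, u)))" for u
  proof -
    have "(u, u) \<in> A0" unfolding A0_def by blast
    with A0 obtain w where "\<phi> (u, u) = (w, w)" unfolding A0_def by blast
    then show ?thesis by simp
  qed
  show "\<phi> (u, - u) = (fst (\<phi> (u, - u)), - fst (\<phi> (u, - u)))" for u
  proof -
    have "(u, - u) \<in> A1" unfolding A1_def by blast
    with A1 obtain w where "\<phi> (u, - u) = (w, - w)" unfolding A1_def by blast
    then show ?thesis by simp
  qed
  show "fst (\<phi> (x + y, x + y)) = fst (\<phi> (x, x)) + fst (\<phi> (y, y))" for x y
    using add[of "(x, x)" "(y, y)"] by simp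
  show "fst (\<phi> (x + y, - (x + y))) = fst (\<phi> (x, - x)) + fst (\<phi> (y, - y))" for x y
    using add[of "(x, - x)" "(y, - y)"] by simp
qed

lemma graded_components_surj:
  fixes scale :: "'k::field \<Rightarrow> 'u::ring_1 \<Rightarrow> 'u" and f g :: "'u \<Rightarrow> 'u"
  assumes "module scale" and "(2::'k) \<noteq> 0" and "surj \<phi>"
    and add: "\<And>x y. \<phi> (x + y) = \<phi> x + \<phi> y"
    and even: "\<And>u. \<phi> (u, u) = (f u, f u)" and odd: "\<And>u. \<phi> (u, - u) = (g u, - g u)"
  shows "surj f" and "surj g"
proof -
  have image: "\<exists>s d. p = f s + g d \<and> q = f s - g d" for p q
  proof -
    obtain x where "\<phi> x = (p, q)" using \<open>surj \<phi>\<close> by (metis surjD)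
    moreover obtain s d where "x = (s, s) + (d, - d)"
      using prod_eq_even_plus_odd[OF assms(1,2)] by blast
    ultimately have "(p, q) = (f s, f s) + (g d, - g d)" by (simp only: add even odd)
    then show ?thesis by auto
  qed
  note two_torsion_free = module_two_torsion_free[OF assms(1,2)]
  show "surj f" unfolding surj_def
  proof
    fix b
    obtain s d where b: "b = f s + g d" "b = f s - g d" using image by blast
    have "g d + g d = (f s + g d) - (f s - g d)" by (simp add: algebra_simps)
    also have "\<dots> = 0" by (simp only: b(1)[symmetric] b(2)[symmetric] diff_self)
    finally have "g d + g d = 0" .
    then have "g d = 0" by (rule two_torsion_free)
    with b show "\<exists>s. b = f s" by auto
  qed
  show "surj g" unfolding surj_def
  proof
    fix b
    obtain s d where b: "b = f s + g d" "- b = f s - g d" using image by blast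
    have "f s + f s = (f s + g d) + (f s - g d)" by (simp add: algebra_simps)
    also have "\<dots> = 0" by (simp only: b(1)[symmetric] b(2)[symmetric] right_minus)
    finally have "f s + f s = 0" .
    then have "f s = 0" by (rule two_torsion_free)
    with b show "\<exists>d. b = g d" by auto
  qed
qed

lemma lie_superaut_component_identities:
  fixes scale :: "'k::field \<Rightarrow> 'u::ring_1 \<Rightarrow> 'u"
  assumes two_torsion_free: "\<And>x::'u. x + x = 0 \<Longrightarrow> x = 0" and "lie_superaut scale \<phi>"
    and even: "\<And>u. \<phi> (u, u) = (f u, f u)" and odd: "\<And>u. \<phi> (u, - u) = (g u, - g u)"
  shows "g (u * v - v * u) = f u * g v - g v * f u"
    and "f (v * w + w * v) = g v * g w + g w * g v"
proof -
  have hom: "\<phi> (scomm x y) = scomm (\<phi> x) (\<phi> y)" if "x \<in> homog" "y \<in> homog" for x y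
    using assms(2) that unfolding lie_superaut_def by blast
  have mem: "(u, u) \<in> homog" "(u, - u) \<in> homog" for u :: 'u
    unfolding homog_def A0_def A1_def by blast+
  have "(g (u * v - v * u), - g (u * v - v * u)) = (f u * g v - g v * f u, - (f u * g v - g v * f u))"
    using hom[OF mem(1,2), of u v] by (simp only: scomm_even_odd[OF two_torsion_free] even odd)
  then show "g (u * v - v * u) = f u * g v - g v * f u" by simp
  have "(f (v * w + w * v), f (v * w + w * v)) = (g v * g w + g w * g v, g v * g w + g w * g v)"
    using hom[OF mem(2,2), of v w] by (simp only: scomm_odd_odd even odd)
  then show "f (v * w + w * v) = g v * g w + g w * g v" by simp
qed

lemma superaut_of_components:
  fixes scale :: "'k::field \<Rightarrow> 'u::ring_1 \<Rightarrow> 'u" and f g :: "'u \<Rightarrow> 'u"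
  assumes "module scale" and "(2::'k) \<noteq> 0" and "bij \<phi>" and gl: "graded_linear scale \<phi>"
    and even: "\<And>u. \<phi> (u, u) = (f u, f u)" and odd: "\<And>u. \<phi> (u, - u) = (g u, - g u)"
    and even_even: "\<And>u w. f (u * w) = f u * f w" and even_odd: "\<And>u w. g (u * w) = f u * g w"
    and odd_even: "\<And>u w. g (u * w) = g u * f w" and odd_odd: "\<And>u w. f (u * w) = g u * g w"
  shows "superaut scale \<phi>"
proof -
  note add = graded_linearD(1)[OF gl]
  have "\<phi> (pmult x y) = pmult (\<phi> x) (\<phi> y)" for x y
  proof -
    obtain s d where x: "x = (s, s) + (d, - d)" using prod_eq_even_plus_odd[OF assms(1,2)] by blast
    obtain s' d' where y: "y = (s', s') + (d', - d')" using prod_eq_even_plus_odd[OF assms(1,2)] by blast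
    have "pmult x y = (s * s', s * s') + (s * d', - (s * d')) + ((d * s', - (d * s')) + (d * d', d * d'))"
      by (simp add: x y pmult_def algebra_simps)
    then have "\<phi> (pmult x y) = (f s * f s', f s * f s') + (f s * g d', - (f s * g d'))
        + ((g d * f s', - (g d * f s')) + (g d * g d', g d * g d'))"
      by (simp only: add even odd even_even[of s s'] even_odd[of s d'] odd_even[of d s'] odd_odd[of d d'])
    also have "\<dots> = pmult ((f s, f s) + (g d, - g d)) ((f s', f s') + (g d', - g d'))"
      by (simp add: pmult_def algebra_simps)
    also have "\<dots> = pmult (\<phi> x) (\<phi> y)" by (simp only: x y add even odd)
    finally show ?thesis .
  qed
  with \<open>bij \<phi>\<close> gl show ?thesis unfolding superaut_def by blast
qed

lemma superantiaut_of_components: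
  fixes scale :: "'k::field \<Rightarrow> 'u::ring_1 \<Rightarrow> 'u" and f g :: "'u \<Rightarrow> 'u"
  assumes "bij \<psi>" and "graded_linear scale \<psi>"
    and even: "\<And>u. \<psi> (u, u) = (f u, f u)" and odd: "\<And>u. \<psi> (u, - u) = (g u, - g u)"
    and even_even: "\<And>u w. f (u * w) = f w * f u" and even_odd: "\<And>u w. g (u * w) = g w * f u"
    and odd_even: "\<And>u w. g (u * w) = f w * g u" and odd_odd: "\<And>u w. f (u * w) = - (g w * g u)"
  shows "superantiaut scale \<psi>"
proof -
  have "\<psi> (pmult x y)
      = (if x \<in> A1 \<and> y \<in> A1 then - pmult (\<psi> y) (\<psi> x) else pmult (\<psi> y) (\<psi> x))"
    if "x \<in> homog" and "y \<in> homog" for x y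
  proof (cases "x \<in> A1 \<and> y \<in> A1")
    case True
    then obtain u w where "x = (u, - u)" and "y = (w, - w)" unfolding A1_def by blast
    then show ?thesis unfolding if_P[OF True] by (simp add: pmult_def even odd odd_odd)
  next
    case False
    with that consider "x \<in> A0" "y \<in> A0" | "x \<in> A0" "y \<in> A1" | "x \<in> A1" "y \<in> A0"
      unfolding homog_def by blast
    then have "\<psi> (pmult x y) = pmult (\<psi> y) (\<psi> x)"
    proof cases
      case 1
      then obtain u w where "x = (u, u)" and "y = (w, w)" unfolding A0_def by blast
      then show ?thesis by (simp add: pmult_def even even_even)
    next
      case 2
      then obtain u w where "x = (u, u)" and "y = (w, - w)" unfolding A0_def A1_def by blast
      then show ?thesis by (simp add: pmult_def even odd even_odd)
    next
      case 3
      then obtain u w where "x = (u, - u)" and "y = (w, w)" unfolding A0_def A1_def by blast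
      then show ?thesis by (simp add: pmult_def even odd odd_even)
    qed
    then show ?thesis unfolding if_not_P[OF False] .
  qed
  with assms(1,2) show ?thesis unfolding superantiaut_def by blast
qed

lemma graded_linear_uminus:
  fixes scale :: "'k::field \<Rightarrow> 'u::ring_1 \<Rightarrow> 'u"
  assumes "module scale" and gl: "graded_linear scale \<phi>"
  shows "graded_linear scale (\<lambda>x. - \<phi> x)"
proof -
  interpret module scale by fact
  have "- \<phi> x \<in> A0" if "x \<in> A0" for x
  proof -
    from that obtain w where "\<phi> x = (w, w)" using graded_linearD(3)[OF gl] unfolding A0_def by blast
    then show ?thesis unfolding A0_def by auto
  qed
  moreover have "- \<phi> x \<in> A1" if "x \<in> A1" for x
  proof -
    from that obtain w where "\<phi> x = (w, - w)" using graded_linearD(4)[OF gl] unfolding A1_def by blast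
    then show ?thesis unfolding A1_def by auto
  qed
  ultimately show ?thesis
    using graded_linearD(1,2)[OF gl] unfolding graded_linear_def by (auto simp: pscale_def)
qed

theorem theorem5p1:
  fixes scale :: "'k::field \<Rightarrow> 'u::ring_1 \<Rightarrow> 'u"
    and \<phi> :: "'u \<times> 'u \<Rightarrow> 'u \<times> 'u"
  assumes char: "(2::'k) \<noteq> 0"
    and alg: "F_algebra scale"
    and noncomm: "\<exists>x y::'u. x * y \<noteq> y * x"
    and prime: "prime_ring TYPE('u)"
    and lie: "lie_superaut scale \<phi>"
  shows "superaut scale \<phi> \<or> superantiaut scale (\<lambda>x. - \<phi> x)"
proof -
  have module: "module scale" using alg unfolding F_algebra_def by blast
  note two_torsion_free = module_two_torsion_free[OF module char]
  from lie have "bij \<phi>" and gl: "graded_linear scale \<phi>" unfolding lie_superaut_def by blast+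
  obtain f g where even: "\<And>u. \<phi> (u, u) = (f u, f u)" and odd: "\<And>u. \<phi> (u, - u) = (g u, - g u)"
    and f_add: "\<And>x y. f (x + y) = f x + f y" and g_add: "\<And>x y. g (x + y) = g x + g y"
    using graded_linear_components[OF gl] by blast
  have "surj f" and "surj g"
    using graded_components_surj[OF module char bij_is_surj[OF \<open>bij \<phi>\<close>] graded_linearD(1)[OF gl] even odd]
    by blast+
  interpret lie_pair f g
    using two_torsion_free f_add g_add \<open>surj f\<close>
      lie_superaut_component_identities[OF two_torsion_free lie even odd]
    by (rule lie_pair.intro)
  from unit_square_cases[OF prime noncomm \<open>surj g\<close>] show ?thesis
  proof
    assume "g 1 * g 1 = 1"
    note mult = mult_if_unit_square_one[OF this]
    have "superaut scale \<phi>" by (rule superaut_of_components[OF module char \<open>bij \<phi>\<close> gl even odd mult])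
    then show ?thesis ..
  next
    assume "g 1 * g 1 = -1"
    note antimult = neg_antimult_if_unit_square_minus_one[OF this]
    have "superantiaut scale (\<lambda>x. - \<phi> x)"
      by (rule superantiaut_of_components[where f = "\<lambda>u. - f u" and g = "\<lambda>u. - g u",
            OF bij_comp[OF \<open>bij \<phi>\<close> bij_uminus, unfolded comp_def] graded_linear_uminus[OF module gl]
            _ _ antimult]) (simp_all add: even odd)
    then show ?thesis ..
  qed
qed

end
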